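(* Let $R$ be a domain and let $G$ be a finite undirected graph without loops with vertex set $A=\{a_1,\dots,a_n\}$, $n\geqslant 2$, such that the complement graph $\overline{G}$ is connected. Suppose the partially commutative Lie algebra $\mathcal{L}(A;G)=L_1\oplus L_2$ is a direct sum of two subalgebras such that for every $i\in\{1,\dots,n\}$ we have $(a_i)_1=a_i+g_i$ and $(a_i)_2=-g_i$ with $g_i\in\mathcal{L}(A;G)$ and $a_i\notin\mathrm{supp}(\omega_1(g_i))$. Then $g_i=0$ for all $i\in\{1,\dots,n\}$.
   Context: All Lie algebras are over the domain $R$. The complement graph $\overline{G}$ has vertex set $A$, with distinct vertices adjacent iff they are not adjacent in $G$. $\mathcal{L}(A;G)$ is the Lie $R$-algebra presented by generators $A$ and relations $[a_p,a_q]=0$ for all edges $\{a_p,a_q\}$ of $G$. Since the relations are multi-homogeneous, every element $h$ is uniquely a sum of nonzero multi-homogeneous components (multi-degree of a Lie monomial = vector counting occurrences of each $a_p$). $\mathrm{supp}(h)$ is the set of $a_p$ occurring with nonzero exponent in the multi-degree of some component of $h$; $\omega_1(h)$ is the sum of the components of length $1$. A direct sum $L=L_1\oplus L_2$ of subalgebras means $L_1,L_2$ are subalgebras, $L=L_1\oplus L_2$ as $R$-modules and $[L_1,L_2]=0$; for $h\in L$, $(h)_1\in L_1$, $(h)_2\in L_2$ are the unique elements with $h=(h)_1+(h)_2$. *)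

theory Defs
  imports Main "HOL-Library.Poly_Mapping"
begin

text \<open>Lie monomials (non-associative words) over an alphabet.\<close>
datatype 'a lmon = Gen 'a | Br "'a lmon" "'a lmon"

fun leaves :: "'a lmon \<Rightarrow> 'a set" where
  "leaves (Gen a) = {a}"
| "leaves (Br u v) = leaves u \<union> leaves v"

fun mlen :: "'a lmon \<Rightarrow> nat" where
  "mlen (Gen a) = 1"
| "mlen (Br u v) = mlen u + mlen v"

text \<open>Free non-associative R-algebra on the letters: finitely supported
  R-linear combinations of Lie monomials, with the bilinear bracket.\<close>
type_synonym ('a,'r) fna = "'a lmon \<Rightarrow>\<^sub>0 'r"

definition gen :: "'a \<Rightarrow> ('a,'r::comm_ring_1) fna" where
  "gen a = Poly_Mapping.single (Gen a) 1"

definition smul :: "'r::comm_ring_1 \<Rightarrow> ('a,'r) fna \<Rightarrow> ('a,'r) fna" where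
  "smul r f = Poly_Mapping.map (\<lambda>c. r * c) f"

definition br :: "('a,'r::comm_ring_1) fna \<Rightarrow> ('a,'r) fna \<Rightarrow> ('a,'r) fna" where
  "br f g = (\<Sum>s\<in>Poly_Mapping.keys f. \<Sum>t\<in>Poly_Mapping.keys g.
              Poly_Mapping.single (Br s t) (Poly_Mapping.lookup f s * Poly_Mapping.lookup g t))"

definition FA :: "'a set \<Rightarrow> ('a,'r::comm_ring_1) fna set" where
  "FA A = {f. \<forall>t\<in>Poly_Mapping.keys f. leaves t \<subseteq> A}"

text \<open>The ideal whose quotient is the partially commutative Lie algebra
  L(A;G): generated by alternativity, Jacobi, and [a_p,a_q] for edges of G.\<close>
inductive_set pcl_ideal :: "'a set \<Rightarrow> ('a \<Rightarrow> 'a \<Rightarrow> bool) \<Rightarrow> ('a,'r::comm_ring_1) fna set"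
  for A :: "'a set" and E :: "'a \<Rightarrow> 'a \<Rightarrow> bool" where
  alt: "x \<in> FA A \<Longrightarrow> br x x \<in> pcl_ideal A E"
| jacobi: "x \<in> FA A \<Longrightarrow> y \<in> FA A \<Longrightarrow> z \<in> FA A \<Longrightarrow>
     br x (br y z) + br y (br z x) + br z (br x y) \<in> pcl_ideal A E"
| edge: "p \<in> A \<Longrightarrow> q \<in> A \<Longrightarrow> E p q \<Longrightarrow> br (gen p) (gen q) \<in> pcl_ideal A E"
| zero: "0 \<in> pcl_ideal A E"
| add: "x \<in> pcl_ideal A E \<Longrightarrow> y \<in> pcl_ideal A E \<Longrightarrow> x + y \<in> pcl_ideal A E"
| smul: "x \<in> pcl_ideal A E \<Longrightarrow> smul r x \<in> pcl_ideal A E"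
| brl: "x \<in> pcl_ideal A E \<Longrightarrow> y \<in> FA A \<Longrightarrow> br x y \<in> pcl_ideal A E"
| brr: "x \<in> pcl_ideal A E \<Longrightarrow> y \<in> FA A \<Longrightarrow> br y x \<in> pcl_ideal A E"

text \<open>A subalgebra of L(A;G) is represented by its full preimage S in FA A:
  an R-submodule closed under bracket and containing the ideal.\<close>
definition pcl_subalg :: "'a set \<Rightarrow> ('a \<Rightarrow> 'a \<Rightarrow> bool) \<Rightarrow> ('a,'r::comm_ring_1) fna set \<Rightarrow> bool" where
  "pcl_subalg A E S \<longleftrightarrow> S \<subseteq> FA A \<and> pcl_ideal A E \<subseteq> S \<and>
     (\<forall>x\<in>S. \<forall>y\<in>S. x + y \<in> S) \<and> (\<forall>r. \<forall>x\<in>S. smul r x \<in> S) \<and>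
     (\<forall>x\<in>S. \<forall>y\<in>S. br x y \<in> S)"

text \<open>L(A;G) = L1 (+) L2 as a direct sum of subalgebras (modulo the ideal).\<close>
definition pcl_direct_sum :: "'a set \<Rightarrow> ('a \<Rightarrow> 'a \<Rightarrow> bool) \<Rightarrow> ('a,'r::comm_ring_1) fna set \<Rightarrow> ('a,'r) fna set \<Rightarrow> bool" where
  "pcl_direct_sum A E L1 L2 \<longleftrightarrow> pcl_subalg A E L1 \<and> pcl_subalg A E L2 \<and>
     (\<forall>x\<in>FA A. \<exists>u\<in>L1. \<exists>v\<in>L2. x = u + v) \<and>
     L1 \<inter> L2 \<subseteq> pcl_ideal A E \<and>
     (\<forall>u\<in>L1. \<forall>v\<in>L2. br u v \<in> pcl_ideal A E)"

text \<open>omega_1: sum of the length-1 components (computed on a representative;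
  well defined since the ideal has no length-1 part).\<close>
definition omega1 :: "('a,'r::comm_ring_1) fna \<Rightarrow> ('a,'r) fna" where
  "omega1 f = (\<Sum>s\<in>Poly_Mapping.keys f. if mlen s = 1 then Poly_Mapping.single s (Poly_Mapping.lookup f s) else 0)"

text \<open>Support: letters occurring in some monomial with nonzero coefficient
  (used only on omega1 values, where it is well defined).\<close>
definition lsupp :: "('a,'r::comm_ring_1) fna \<Rightarrow> 'a set" where
  "lsupp f = (\<Union>t\<in>Poly_Mapping.keys f. leaves t)"

definition compl_connected :: "'a set \<Rightarrow> ('a \<Rightarrow> 'a \<Rightarrow> bool) \<Rightarrow> bool" where
  "compl_connected A E \<longleftrightarrow>
     (\<forall>x\<in>A. \<forall>y\<in>A. (\<lambda>u v. u \<in> A \<and> v \<in> A \<and> u \<noteq> v \<and> \<not> E u v)\<^sup>*\<^sup>* x y)"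

end

(*
  If a_k and a_l are distinct and not adjacent in G, the coefficients of [a_k,a_l] and [a_l,a_k]
  agree on every element of the defining ideal. Applied to [a_i + g_i, g_j], which lies in the ideal
  because [L_1, L_2] = 0, this gives quadratic relations between the linear coefficients of the g_j.
  Since every vertex has a non-neighbour in G and a_i does not occur linearly in g_i, these relations
  force every g_j to consist of monomials of length at least 2.

  Let sigma be the substitution a_i -> a_i + g_i. For every h, sigma(h) lies in L_1, h - sigma(h)
  lies in L_2, and modulo the ideal h - sigma(h) only involves monomials longer than those of h.
  For h in L_2, sigma(h) lies in L_1 and L_2, hence in the ideal, so h is congruent to elements of
  arbitrarily large minimal length. As the ideal is graded by length, all of L_2 lies in the ideal,
  in particular -g_i.
*)
theory Submission
  imports Defs
begin

section \<open>Coefficients and the bracket\<close>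

abbreviation coeff :: "('a,'r::comm_ring_1) fna \<Rightarrow> 'a lmon \<Rightarrow> 'r" where
  "coeff f t \<equiv> Poly_Mapping.lookup f t"

lemma coeff_br_Gen [simp]: "coeff (br f g) (Gen a) = 0"
  by (simp add: br_def lookup_sum Poly_Mapping.lookup_single when_def)

lemma coeff_br_Br [simp]: "coeff (br f g) (Br s t) = coeff f s * coeff g t"
proof -
  have "coeff (br f g) (Br s t) = (\<Sum>s'\<in>Poly_Mapping.keys f. if s' = s then
      (\<Sum>t'\<in>Poly_Mapping.keys g. if t' = t then coeff f s * coeff g t else 0) else 0)"
    unfolding br_def lookup_sum by (intro sum.cong refl) (auto simp: Poly_Mapping.lookup_single when_def)
  also have "\<dots> = coeff f s * coeff g t"
    by (auto simp: in_keys_iff)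
  finally show ?thesis .
qed

lemma coeff_smul [simp]: "coeff (smul r f) t = r * coeff f t"
  by (simp add: smul_def Poly_Mapping.map.rep_eq when_def)

lemma coeff_gen: "coeff (gen a) t = (if t = Gen a then 1 else 0)"
  by (simp add: gen_def Poly_Mapping.lookup_single when_def)

lemma coeff_single_one: "coeff (Poly_Mapping.single s 1) t = (if t = s then 1 else 0)"
  by (simp add: Poly_Mapping.lookup_single when_def)

lemma poly_mapping_lmon_eqI:
  assumes "\<And>a. coeff f (Gen a) = coeff g (Gen a)" and "\<And>s t. coeff f (Br s t) = coeff g (Br s t)"
  shows "f = g"
proof (rule poly_mapping_eqI)
  show "coeff f t = coeff g t" for t
    using assms by (cases t) auto
qed

lemma br_add_left: "br (f + g) h = br f h + br g h"
  and br_add_right: "br h (f + g) = br h f + br h g"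
  and br_diff_left: "br (f - g) h = br f h - br g h"
  and br_diff_right: "br h (f - g) = br h f - br h g"
  and br_zero_left [simp]: "br 0 h = 0"
  by (rule poly_mapping_lmon_eqI; simp add: lookup_add lookup_minus algebra_simps)+

lemma br_sum_left: "br (\<Sum>x\<in>X. f x) h = (\<Sum>x\<in>X. br (f x) h)"
  and br_sum_right: "br h (\<Sum>x\<in>X. f x) = (\<Sum>x\<in>X. br h (f x))"
  by (rule poly_mapping_lmon_eqI; simp add: lookup_sum sum_distrib_left sum_distrib_right)+

lemma smul_minus_one: "smul (-1) f = - f"
  by (rule poly_mapping_eqI) simp

lemma smul_diff: "smul r (f - g) = smul r f - smul r g"
  by (rule poly_mapping_eqI) (simp add: lookup_minus algebra_simps)

lemma single_Br_eq_br:
  "Poly_Mapping.single (Br s t) 1 = br (Poly_Mapping.single s 1) (Poly_Mapping.single t (1::'r::comm_ring_1))"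
  by (rule poly_mapping_lmon_eqI) (simp_all add: coeff_single_one)

lemma sum_smul_single_keys: "(\<Sum>t\<in>Poly_Mapping.keys f. smul (coeff f t) (Poly_Mapping.single t 1)) = f"
proof (rule poly_mapping_eqI)
  fix s
  have "coeff (\<Sum>t\<in>Poly_Mapping.keys f. smul (coeff f t) (Poly_Mapping.single t 1)) s =
      (\<Sum>t\<in>Poly_Mapping.keys f. if t = s then coeff f s else 0)"
    unfolding lookup_sum coeff_smul coeff_single_one by (intro sum.cong) auto
  also have "\<dots> = coeff f s"
    by (simp add: in_keys_iff)
  finally show "coeff (\<Sum>t\<in>Poly_Mapping.keys f. smul (coeff f t) (Poly_Mapping.single t 1)) s = coeff f s" .
qed

lemma FA_iff: "f \<in> FA A \<longleftrightarrow> (\<forall>t. coeff f t \<noteq> 0 \<longrightarrow> leaves t \<subseteq> A)"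
  by (auto simp: FA_def in_keys_iff)

lemma FA_add: "f \<in> FA A \<Longrightarrow> g \<in> FA A \<Longrightarrow> f + g \<in> FA A"
  unfolding FA_iff lookup_add by (metis add.right_neutral)

lemma FA_br: "f \<in> FA A \<Longrightarrow> g \<in> FA A \<Longrightarrow> br f g \<in> FA A"
  unfolding FA_iff
proof (intro allI impI)
  fix t assume "\<forall>t. coeff f t \<noteq> 0 \<longrightarrow> leaves t \<subseteq> A" "\<forall>t. coeff g t \<noteq> 0 \<longrightarrow> leaves t \<subseteq> A"
    and "coeff (br f g) t \<noteq> 0"
  then show "leaves t \<subseteq> A"
    by (cases t) (auto dest!: mult_not_zero)
qed

section \<open>Grading by length\<close>

lemma mlen_ge_1: "1 \<le> mlen t"
  by (induction t) auto

abbreviation lengths :: "('a,'r::comm_ring_1) fna \<Rightarrow> nat set" where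
  "lengths f \<equiv> mlen ` Poly_Mapping.keys f"

definition component :: "nat \<Rightarrow> ('a,'r::comm_ring_1) fna \<Rightarrow> ('a,'r) fna" where
  "component d f = Poly_Mapping.mapp (\<lambda>t c. if mlen t = d then c else 0) f"

definition homogeneous :: "nat \<Rightarrow> ('a,'r::comm_ring_1) fna \<Rightarrow> bool" where
  "homogeneous d f \<longleftrightarrow> (\<forall>t. coeff f t \<noteq> 0 \<longrightarrow> mlen t = d)"

lemma coeff_component [simp]: "coeff (component d f) t = (if mlen t = d then coeff f t else 0)"
  by (simp add: component_def lookup_mapp when_def in_keys_iff)

lemma homogeneous_component: "homogeneous d (component d f)"
  by (simp add: homogeneous_def)

lemma homogeneous_add: "homogeneous d f \<Longrightarrow> homogeneous d g \<Longrightarrow> homogeneous d (f + g)"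
  unfolding homogeneous_def lookup_add by (metis add.right_neutral)

lemma homogeneous_br: "homogeneous a f \<Longrightarrow> homogeneous b g \<Longrightarrow> homogeneous (a + b) (br f g)"
  unfolding homogeneous_def
proof (intro allI impI)
  fix t assume "\<forall>t. coeff f t \<noteq> 0 \<longrightarrow> mlen t = a" "\<forall>t. coeff g t \<noteq> 0 \<longrightarrow> mlen t = b"
    and "coeff (br f g) t \<noteq> 0"
  then show "mlen t = a + b"
    by (cases t) (auto dest!: mult_not_zero)
qed

lemma component_homogeneous: "homogeneous a f \<Longrightarrow> component d f = (if a = d then f else 0)"
  by (rule poly_mapping_eqI) (auto simp: homogeneous_def)

lemma component_add: "component d (f + g) = component d f + component d g"
  by (rule poly_mapping_eqI) (simp add: lookup_add)

lemma component_smul: "component d (smul r f) = smul r (component d f)"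
  by (rule poly_mapping_eqI) simp

lemma component_diff: "component d (f - g) = component d f - component d g"
  by (rule poly_mapping_eqI) (simp add: lookup_minus)

lemma component_zero [simp]: "component d 0 = 0"
  by (rule poly_mapping_eqI) simp

lemma component_sum: "component d (\<Sum>x\<in>X. f x) = (\<Sum>x\<in>X. component d (f x))"
  by (rule poly_mapping_eqI) (simp add: lookup_sum)

lemma FA_component: "f \<in> FA A \<Longrightarrow> component d f \<in> FA A"
  by (simp add: FA_iff)

lemma sum_components: "(\<Sum>d\<in>lengths f. component d f) = f"
proof (rule poly_mapping_eqI)
  fix t
  have "coeff (\<Sum>d\<in>lengths f. component d f) t =
      (\<Sum>d\<in>lengths f. if mlen t = d then coeff f t else 0)"
    by (simp add: lookup_sum)
  also have "\<dots> = coeff f t"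
    by (auto simp: in_keys_iff)
  finally show "coeff (\<Sum>d\<in>lengths f. component d f) t = coeff f t" .
qed

lemma br_eq_sum_components:
  "br f g = (\<Sum>a\<in>lengths f. \<Sum>b\<in>lengths g. br (component a f) (component b g))"
proof -
  have "br f g = br (\<Sum>a\<in>lengths f. component a f) (\<Sum>b\<in>lengths g. component b g)"
    by (simp only: sum_components)
  also have "\<dots> = (\<Sum>a\<in>lengths f. \<Sum>b\<in>lengths g. br (component a f) (component b g))"
    by (simp add: br_sum_left br_sum_right) (rule sum.swap)
  finally show ?thesis .
qed

definition jacobiator :: "('a,'r::comm_ring_1) fna \<Rightarrow> ('a,'r) fna \<Rightarrow> ('a,'r) fna \<Rightarrow> ('a,'r) fna" where
  "jacobiator x y z = br x (br y z) + br y (br z x) + br z (br x y)"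

lemma homogeneous_jacobiator:
  "homogeneous a x \<Longrightarrow> homogeneous b y \<Longrightarrow> homogeneous c z \<Longrightarrow> homogeneous (a + b + c) (jacobiator x y z)"
proof -
  assume "homogeneous a x" "homogeneous b y" "homogeneous c z"
  then have "homogeneous (a + (b + c)) (br x (br y z))" "homogeneous (b + (c + a)) (br y (br z x))"
      "homogeneous (c + (a + b)) (br z (br x y))"
    by (auto intro!: homogeneous_br)
  then show ?thesis
    unfolding jacobiator_def by (intro homogeneous_add) (simp_all add: ac_simps)
qed

lemma jacobiator_sum:
  "jacobiator (\<Sum>a\<in>X. f a) (\<Sum>b\<in>Y. g b) (\<Sum>c\<in>Z. h c) =
    (\<Sum>a\<in>X. \<Sum>b\<in>Y. \<Sum>c\<in>Z. jacobiator (f a) (g b) (h c))"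
proof -
  have left: "jacobiator (\<Sum>a\<in>X. f a) y z = (\<Sum>a\<in>X. jacobiator (f a) y z)"
    and middle: "jacobiator x (\<Sum>b\<in>Y. g b) z = (\<Sum>b\<in>Y. jacobiator x (g b) z)"
    and right: "jacobiator x y (\<Sum>c\<in>Z. h c) = (\<Sum>c\<in>Z. jacobiator x y (h c))" for x y z
    by (simp_all add: jacobiator_def br_sum_left br_sum_right sum.distrib)
  show ?thesis
    by (simp only: left, simp only: middle, simp only: right)
qed

definition vanishes_below :: "nat \<Rightarrow> ('a,'r::comm_ring_1) fna \<Rightarrow> bool" where
  "vanishes_below d f \<longleftrightarrow> (\<forall>t. coeff f t \<noteq> 0 \<longrightarrow> d \<le> mlen t)"

lemma vanishes_below_mono: "vanishes_below d f \<Longrightarrow> d' \<le> d \<Longrightarrow> vanishes_below d' f"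
  by (auto simp: vanishes_below_def)

lemma vanishes_below_br: "vanishes_below a f \<Longrightarrow> vanishes_below b g \<Longrightarrow> vanishes_below (a + b) (br f g)"
  unfolding vanishes_below_def
proof (intro allI impI)
  fix t assume "\<forall>t. coeff f t \<noteq> 0 \<longrightarrow> a \<le> mlen t" "\<forall>t. coeff g t \<noteq> 0 \<longrightarrow> b \<le> mlen t"
    and "coeff (br f g) t \<noteq> 0"
  then show "a + b \<le> mlen t"
    by (cases t) (auto dest!: mult_not_zero intro: add_mono)
qed

lemma vanishes_below_uminus: "vanishes_below d f \<Longrightarrow> vanishes_below d (- f)"
  by (simp add: vanishes_below_def)

lemma vanishes_below_smul: "vanishes_below d f \<Longrightarrow> vanishes_below d (smul r f)"
  unfolding vanishes_below_def coeff_smul by (metis mult_zero_right)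

lemma vanishes_below_sum:
  "(\<And>x. x \<in> X \<Longrightarrow> vanishes_below d (f x)) \<Longrightarrow> vanishes_below d (\<Sum>x\<in>X. f x)"
proof (induction X rule: infinite_finite_induct)
  case (insert x X)
  then show ?case
    unfolding vanishes_below_def by (simp add: lookup_add) (metis add_0)
qed (simp_all add: vanishes_below_def)

section \<open>The defining ideal\<close>

definition components_in :: "('a,'r::comm_ring_1) fna set \<Rightarrow> ('a,'r) fna \<Rightarrow> bool" where
  "components_in S f \<longleftrightarrow> (\<forall>d. component d f \<in> S)"

context
  fixes A :: "'a set" and E :: "'a \<Rightarrow> 'a \<Rightarrow> bool"
begin

lemma coeff_Gen_pcl_ideal: "f \<in> pcl_ideal A E \<Longrightarrow> coeff f (Gen a) = 0"
  by (induction rule: pcl_ideal.induct) (auto simp: lookup_add)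

lemma pcl_ideal_uminus: "f \<in> pcl_ideal A E \<Longrightarrow> - f \<in> pcl_ideal A E"
  using pcl_ideal.smul[of f A E "-1"] by (simp add: smul_minus_one)

lemma pcl_ideal_diff: "f \<in> pcl_ideal A E \<Longrightarrow> g \<in> pcl_ideal A E \<Longrightarrow> f - g \<in> pcl_ideal A E"
  using pcl_ideal.add[OF _ pcl_ideal_uminus[of g]] by simp

lemma pcl_ideal_sum: "(\<And>x. x \<in> X \<Longrightarrow> f x \<in> pcl_ideal A E) \<Longrightarrow> (\<Sum>x\<in>X. f x) \<in> pcl_ideal A E"
  by (induction X rule: infinite_finite_induct) (auto intro: pcl_ideal.intros)

lemma br_anticommute_pcl_ideal:
  assumes "u \<in> FA A" and "v \<in> FA A"
  shows "br u v + br v u \<in> pcl_ideal A E"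
proof -
  have "br u v + br v u = br (u + v) (u + v) - br u u - br v v"
    by (simp add: br_add_left br_add_right algebra_simps)
  also have "\<dots> \<in> pcl_ideal A E"
    by (intro pcl_ideal_diff pcl_ideal.alt FA_add assms)
  finally show ?thesis .
qed

lemma coeff_swap_pcl_ideal:
  assumes "\<And>p q. E p q \<Longrightarrow> E q p" and "k \<noteq> l" and "\<not> E k l"
  shows "f \<in> pcl_ideal A E \<Longrightarrow> coeff f (Br (Gen k) (Gen l)) = coeff f (Br (Gen l) (Gen k))"
proof (induction rule: pcl_ideal.induct)
  case (edge p q)
  then show ?case using assms by (auto simp: coeff_gen)
next
  case (brl x y)
  then show ?case by (simp add: coeff_Gen_pcl_ideal)
next
  case (brr x y)
  then show ?case by (simp add: coeff_Gen_pcl_ideal)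
qed (auto simp: lookup_add mult.commute)

lemma components_in_homogeneous:
  "homogeneous n f \<Longrightarrow> f \<in> pcl_ideal A E \<Longrightarrow> components_in (pcl_ideal A E) f"
  by (simp add: components_in_def component_homogeneous pcl_ideal.zero)

lemma components_in_add:
  "components_in (pcl_ideal A E) f \<Longrightarrow> components_in (pcl_ideal A E) g \<Longrightarrow>
    components_in (pcl_ideal A E) (f + g)"
  by (simp add: components_in_def component_add pcl_ideal.add)

lemma components_in_sum:
  "(\<And>x. x \<in> X \<Longrightarrow> components_in (pcl_ideal A E) (f x)) \<Longrightarrow>
    components_in (pcl_ideal A E) (\<Sum>x\<in>X. f x)"
  by (simp add: components_in_def component_sum pcl_ideal_sum)

lemma components_in_br_sum_self:
  assumes "finite K" and "\<And>k. k \<in> K \<Longrightarrow> u k \<in> FA A"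
    and "\<And>k. k \<in> K \<Longrightarrow> homogeneous (deg k) (u k)"
  shows "components_in (pcl_ideal A E) (br (\<Sum>k\<in>K. u k) (\<Sum>k\<in>K. u k))"
  using assms
proof (induction K rule: finite_induct)
  case empty
  then show ?case by (simp add: components_in_def pcl_ideal.zero)
next
  case (insert c K)
  let ?S = "\<Sum>k\<in>K. u k"
  have split: "br (\<Sum>k\<in>insert c K. u k) (\<Sum>k\<in>insert c K. u k) =
      br (u c) (u c) + (\<Sum>k\<in>K. br (u c) (u k) + br (u k) (u c)) + br ?S ?S"
    using insert.hyps by (simp add: br_add_left br_add_right br_sum_left br_sum_right sum.distrib)
  have square: "components_in (pcl_ideal A E) (br (u c) (u c))"
    using insert.prems by (intro components_in_homogeneous[OF homogeneous_br] pcl_ideal.alt) auto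
  have cross: "components_in (pcl_ideal A E) (br (u c) (u k) + br (u k) (u c))" if "k \<in> K" for k
  proof (intro components_in_homogeneous homogeneous_add br_anticommute_pcl_ideal)
    show "homogeneous (deg c + deg k) (br (u c) (u k))"
      using insert.prems that by (simp add: homogeneous_br)
    show "homogeneous (deg c + deg k) (br (u k) (u c))"
      using insert.prems that homogeneous_br[of "deg k" "u k" "deg c" "u c"] by (simp add: add.commute)
  qed (use insert.prems that in auto)
  have "components_in (pcl_ideal A E) (br ?S ?S)"
    using insert by simp
  then show ?case
    unfolding split by (intro components_in_add[OF components_in_add[OF square components_in_sum]] cross)
qed

lemma components_in_pcl_ideal: "f \<in> pcl_ideal A E \<Longrightarrow> components_in (pcl_ideal A E) f"
proof (induction rule: pcl_ideal.induct)
  case (alt x)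
  have "br x x = br (\<Sum>d\<in>lengths x. component d x) (\<Sum>d\<in>lengths x. component d x)"
    by (simp add: sum_components)
  also have "components_in (pcl_ideal A E) \<dots>"
    using alt by (intro components_in_br_sum_self[where deg = id]) (auto intro: FA_component homogeneous_component)
  finally show ?case .
next
  case (jacobi x y z)
  have "br x (br y z) + br y (br z x) + br z (br x y) =
      jacobiator (\<Sum>a\<in>lengths x. component a x) (\<Sum>b\<in>lengths y. component b y)
        (\<Sum>c\<in>lengths z. component c z)"
    by (simp add: sum_components jacobiator_def)
  also have "components_in (pcl_ideal A E) \<dots>"
    unfolding jacobiator_sum using jacobi
    by (intro components_in_sum components_in_homogeneous[OF homogeneous_jacobiator[OF homogeneous_component
          homogeneous_component homogeneous_component]])
      (simp add: jacobiator_def pcl_ideal.jacobi FA_component)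
  finally show ?case .
next
  case (edge p q)
  have "homogeneous 1 (gen a)" for a :: 'a
    by (simp add: homogeneous_def coeff_gen)
  then have "homogeneous (1 + 1) (br (gen p) (gen q))"
    by (intro homogeneous_br)
  then show ?case
    using edge by (intro components_in_homogeneous pcl_ideal.edge)
next
  case zero
  then show ?case by (simp add: components_in_def pcl_ideal.zero)
next
  case (add x y)
  then show ?case by (simp add: components_in_add)
next
  case (smul x r)
  then show ?case by (simp add: components_in_def component_smul pcl_ideal.smul)
next
  case (brl x y)
  have "components_in (pcl_ideal A E) (\<Sum>a\<in>lengths x. \<Sum>b\<in>lengths y.
      br (component a x) (component b y))"
    using brl by (intro components_in_sum components_in_homogeneous[OF homogeneous_br[OF homogeneous_component
          homogeneous_component]] pcl_ideal.brl FA_component) (auto simp: components_in_def)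
  then show ?case by (subst br_eq_sum_components)
next
  case (brr x y)
  have "components_in (pcl_ideal A E) (\<Sum>a\<in>lengths y. \<Sum>b\<in>lengths x.
      br (component a y) (component b x))"
    using brr by (intro components_in_sum components_in_homogeneous[OF homogeneous_br[OF homogeneous_component
          homogeneous_component]] pcl_ideal.brr FA_component) (auto simp: components_in_def)
  then show ?case by (subst br_eq_sum_components)
qed

lemma pcl_ideal_if_congruent_vanishes_below:
  assumes cong: "f - h \<in> pcl_ideal A E" and h: "vanishes_below d h"
    and f: "\<And>t. t \<in> Poly_Mapping.keys f \<Longrightarrow> mlen t < d"
  shows "f \<in> pcl_ideal A E"
proof -
  have "component n f \<in> pcl_ideal A E" if "n \<in> lengths f" for n
  proof -
    have "component n h = 0"
      using f that h by (intro poly_mapping_eqI) (force simp: vanishes_below_def)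
    then have "component n f = component n (f - h)"
      by (simp add: component_diff)
    then show ?thesis
      using components_in_pcl_ideal[OF cong] by (simp add: components_in_def)
  qed
  then have "(\<Sum>n\<in>lengths f. component n f) \<in> pcl_ideal A E"
    by (rule pcl_ideal_sum)
  then show ?thesis
    by (simp add: sum_components)
qed

end

section \<open>Subalgebras and the substitution a_i -> a_i + g_i\<close>

lemma pcl_subalg_FA: "pcl_subalg A E S \<Longrightarrow> S \<subseteq> FA A"
  and pcl_subalg_pcl_ideal: "pcl_subalg A E S \<Longrightarrow> pcl_ideal A E \<subseteq> S"
  and pcl_subalg_add: "pcl_subalg A E S \<Longrightarrow> x \<in> S \<Longrightarrow> y \<in> S \<Longrightarrow> x + y \<in> S"
  and pcl_subalg_smul: "pcl_subalg A E S \<Longrightarrow> x \<in> S \<Longrightarrow> smul r x \<in> S"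
  and pcl_subalg_br: "pcl_subalg A E S \<Longrightarrow> x \<in> S \<Longrightarrow> y \<in> S \<Longrightarrow> br x y \<in> S"
  by (simp_all add: pcl_subalg_def)

lemma pcl_subalg_diff: "pcl_subalg A E S \<Longrightarrow> x \<in> S \<Longrightarrow> y \<in> S \<Longrightarrow> x - y \<in> S"
  using pcl_subalg_add[of A E S x "smul (-1) y"] pcl_subalg_smul[of A E S y "-1"] by (simp add: smul_minus_one)

lemma pcl_subalg_zero: "pcl_subalg A E S \<Longrightarrow> 0 \<in> S"
  using pcl_subalg_pcl_ideal pcl_ideal.zero by blast

lemma pcl_subalg_sum: "pcl_subalg A E S \<Longrightarrow> (\<And>x. x \<in> X \<Longrightarrow> f x \<in> S) \<Longrightarrow> (\<Sum>x\<in>X. f x) \<in> S"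
  by (induction X rule: infinite_finite_induct) (auto intro: pcl_subalg_add pcl_subalg_zero)

fun subst_lmon :: "('a \<Rightarrow> ('a,'r::comm_ring_1) fna) \<Rightarrow> 'a lmon \<Rightarrow> ('a,'r) fna" where
  "subst_lmon g (Gen a) = gen a + g a"
| "subst_lmon g (Br u v) = br (subst_lmon g u) (subst_lmon g v)"

definition subst :: "('a \<Rightarrow> ('a,'r::comm_ring_1) fna) \<Rightarrow> ('a,'r) fna \<Rightarrow> ('a,'r) fna" where
  "subst g f = (\<Sum>t\<in>Poly_Mapping.keys f. smul (coeff f t) (subst_lmon g t))"

definition subst_defect :: "('a \<Rightarrow> ('a,'r::comm_ring_1) fna) \<Rightarrow> 'a lmon \<Rightarrow> ('a,'r) fna" where
  "subst_defect g t = Poly_Mapping.single t 1 - subst_lmon g t"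

lemma subst_defect_Gen: "subst_defect g (Gen a) = - g a"
  by (simp add: subst_defect_def gen_def)

lemma subst_defect_Br:
  "subst_defect g (Br u v) - br (subst_defect g u) (subst_defect g v) =
    br (subst_lmon g u) (subst_defect g v) + br (subst_defect g u) (subst_lmon g v)"
  by (simp add: subst_defect_def single_Br_eq_br br_diff_left br_diff_right algebra_simps)

lemma diff_subst: "f - subst g f = (\<Sum>t\<in>Poly_Mapping.keys f. smul (coeff f t) (subst_defect g t))"
  by (simp add: subst_def subst_defect_def smul_diff sum_subtractf sum_smul_single_keys)

context
  fixes A :: "'a set" and E :: "'a \<Rightarrow> 'a \<Rightarrow> bool"
    and L1 L2 :: "('a, 'r::comm_ring_1) fna set" and g :: "'a \<Rightarrow> ('a, 'r) fna"
  assumes direct_sum: "pcl_direct_sum A E L1 L2"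
    and shifted_gen_L1: "\<And>i. i \<in> A \<Longrightarrow> gen i + g i \<in> L1"
    and minus_g_L2: "\<And>i. i \<in> A \<Longrightarrow> - g i \<in> L2"
begin

lemma pcl_subalg_L1: "pcl_subalg A E L1"
  and pcl_subalg_L2: "pcl_subalg A E L2"
  and L1_inter_L2: "L1 \<inter> L2 \<subseteq> pcl_ideal A E"
  and br_L1_L2: "u \<in> L1 \<Longrightarrow> v \<in> L2 \<Longrightarrow> br u v \<in> pcl_ideal A E"
  using direct_sum by (auto simp: pcl_direct_sum_def)

lemma br_L2_L1: "u \<in> L1 \<Longrightarrow> v \<in> L2 \<Longrightarrow> br v u \<in> pcl_ideal A E"
proof -
  assume u: "u \<in> L1" and v: "v \<in> L2"
  have "br v u = (br u v + br v u) - br u v"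
    by simp
  also have "\<dots> \<in> pcl_ideal A E"
    using u v pcl_subalg_FA[OF pcl_subalg_L1] pcl_subalg_FA[OF pcl_subalg_L2]
    by (intro pcl_ideal_diff br_anticommute_pcl_ideal br_L1_L2) auto
  finally show ?thesis .
qed

lemma subst_lmon_L1: "leaves t \<subseteq> A \<Longrightarrow> subst_lmon g t \<in> L1"
  by (induction t) (auto intro: shifted_gen_L1 pcl_subalg_br[OF pcl_subalg_L1])

lemma subst_defect_Br_pcl_ideal:
  assumes "leaves (Br u v) \<subseteq> A" and "subst_defect g u \<in> L2" and "subst_defect g v \<in> L2"
  shows "subst_defect g (Br u v) - br (subst_defect g u) (subst_defect g v) \<in> pcl_ideal A E"
  unfolding subst_defect_Br using assms
  by (intro pcl_ideal.add br_L1_L2 br_L2_L1 subst_lmon_L1) auto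

lemma subst_defect_L2: "leaves t \<subseteq> A \<Longrightarrow> subst_defect g t \<in> L2"
proof (induction t)
  case (Gen a)
  then show ?case by (simp add: subst_defect_Gen minus_g_L2)
next
  case (Br u v)
  then have "subst_defect g u \<in> L2" and "subst_defect g v \<in> L2"
    by auto
  then have "subst_defect g (Br u v) - br (subst_defect g u) (subst_defect g v) + br (subst_defect g u) (subst_defect g v) \<in> L2"
    using Br.prems subst_defect_Br_pcl_ideal pcl_subalg_pcl_ideal[OF pcl_subalg_L2]
    by (intro pcl_subalg_add[OF pcl_subalg_L2] pcl_subalg_br[OF pcl_subalg_L2]) auto
  then show ?case
    by simp
qed

lemma subst_L1: "f \<in> FA A \<Longrightarrow> subst g f \<in> L1"
  unfolding subst_def FA_def
  by (intro pcl_subalg_sum[OF pcl_subalg_L1] pcl_subalg_smul[OF pcl_subalg_L1] subst_lmon_L1) auto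

lemma diff_subst_L2: "f \<in> FA A \<Longrightarrow> f - subst g f \<in> L2"
  unfolding diff_subst FA_def
  by (intro pcl_subalg_sum[OF pcl_subalg_L2] pcl_subalg_smul[OF pcl_subalg_L2] subst_defect_L2) auto

lemma subst_pcl_ideal: "h \<in> L2 \<Longrightarrow> subst g h \<in> pcl_ideal A E"
proof -
  assume h: "h \<in> L2"
  then have FA: "h \<in> FA A"
    using pcl_subalg_FA[OF pcl_subalg_L2] by auto
  have "subst g h = h - (h - subst g h)"
    by simp
  also have "\<dots> \<in> L2"
    using h diff_subst_L2[OF FA] by (rule pcl_subalg_diff[OF pcl_subalg_L2])
  finally show ?thesis
    using subst_L1[OF FA] L1_inter_L2 by auto
qed

context
  assumes g_vanishes_below_2: "\<And>i. i \<in> A \<Longrightarrow> vanishes_below 2 (g i)"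
begin

lemma subst_defect_congruent_vanishes_below:
  "leaves t \<subseteq> A \<Longrightarrow>
    \<exists>h\<in>FA A. vanishes_below (mlen t + 1) h \<and> subst_defect g t - h \<in> pcl_ideal A E"
proof (induction t)
  case (Gen a)
  then have "- g a \<in> FA A"
    using minus_g_L2 pcl_subalg_FA[OF pcl_subalg_L2] by auto
  then show ?case
    using Gen g_vanishes_below_2[of a]
    by (intro bexI[of _ "- g a"]) (auto simp: subst_defect_Gen numeral_2_eq_2 intro: vanishes_below_uminus pcl_ideal.zero)
next
  case (Br u v)
  then obtain hu hv where hu: "hu \<in> FA A" "vanishes_below (mlen u + 1) hu" "subst_defect g u - hu \<in> pcl_ideal A E"
    and hv: "hv \<in> FA A" "vanishes_below (mlen v + 1) hv" "subst_defect g v - hv \<in> pcl_ideal A E"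
    by auto
  have defect_v: "subst_defect g v \<in> FA A"
    using Br.prems subst_defect_L2 pcl_subalg_FA[OF pcl_subalg_L2] by auto
  have "subst_defect g (Br u v) - br hu hv =
      (subst_defect g (Br u v) - br (subst_defect g u) (subst_defect g v))
      + br (subst_defect g u - hu) (subst_defect g v) + br hu (subst_defect g v - hv)"
    by (simp add: br_diff_left br_diff_right)
  also have "\<dots> \<in> pcl_ideal A E"
    using Br.prems hu hv defect_v
    by (intro pcl_ideal.add pcl_ideal.brl pcl_ideal.brr subst_defect_Br_pcl_ideal subst_defect_L2) auto
  finally have "subst_defect g (Br u v) - br hu hv \<in> pcl_ideal A E" .
  moreover have "vanishes_below (mlen (Br u v) + 1) (br hu hv)"
    using vanishes_below_br[OF hu(2) hv(2)] by (rule vanishes_below_mono) simp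
  ultimately show ?case
    using hu hv by (intro bexI[of _ "br hu hv"] conjI FA_br)
qed

lemma L2_congruent_vanishes_below: "y \<in> L2 \<Longrightarrow> \<exists>h. vanishes_below m h \<and> y - h \<in> pcl_ideal A E"
proof (induction m)
  case 0
  then show ?case
    by (intro exI[of _ y]) (simp add: vanishes_below_def pcl_ideal.zero)
next
  case (Suc m)
  then obtain h where h: "vanishes_below m h" "y - h \<in> pcl_ideal A E"
    by auto
  have "y - h \<in> L2"
    using h(2) pcl_subalg_pcl_ideal[OF pcl_subalg_L2] by auto
  with Suc.prems have "y - (y - h) \<in> L2"
    by (rule pcl_subalg_diff[OF pcl_subalg_L2])
  then have h_L2: "h \<in> L2"
    by simp
  then have "\<forall>t\<in>Poly_Mapping.keys h. leaves t \<subseteq> A"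
    using pcl_subalg_FA[OF pcl_subalg_L2] by (auto simp: FA_def)
  then obtain H where H: "\<And>t. t \<in> Poly_Mapping.keys h \<Longrightarrow>
      vanishes_below (mlen t + 1) (H t) \<and> subst_defect g t - H t \<in> pcl_ideal A E"
    using subst_defect_congruent_vanishes_below by metis
  define h' where "h' = (\<Sum>t\<in>Poly_Mapping.keys h. smul (coeff h t) (H t))"
  have "y - h' = (y - h) + subst g h + (\<Sum>t\<in>Poly_Mapping.keys h. smul (coeff h t) (subst_defect g t - H t))"
    by (simp add: h'_def smul_diff sum_subtractf flip: diff_subst)
  also have "\<dots> \<in> pcl_ideal A E"
    using h(2) subst_pcl_ideal[OF h_L2] H by (intro pcl_ideal.add pcl_ideal_sum pcl_ideal.smul) auto
  finally have "y - h' \<in> pcl_ideal A E" .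
  moreover have "vanishes_below (Suc m) h'"
    unfolding h'_def
  proof (intro vanishes_below_sum vanishes_below_smul)
    fix t assume t: "t \<in> Poly_Mapping.keys h"
    then have "m \<le> mlen t"
      using h(1) by (auto simp: vanishes_below_def in_keys_iff)
    then show "vanishes_below (Suc m) (H t)"
      using H[OF t] vanishes_below_mono by fastforce
  qed
  ultimately show ?case
    by blast
qed

lemma L2_subset_pcl_ideal: "L2 \<subseteq> pcl_ideal A E"
proof
  fix y assume y: "y \<in> L2"
  obtain d where d: "\<And>t. t \<in> Poly_Mapping.keys y \<Longrightarrow> mlen t < d"
    using finite_nat_set_iff_bounded[of "lengths y"] by auto
  obtain h where h: "vanishes_below d h" and cong: "y - h \<in> pcl_ideal A E"
    using L2_congruent_vanishes_below[OF y] by blast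
  show "y \<in> pcl_ideal A E"
    by (rule pcl_ideal_if_congruent_vanishes_below[OF cong h d])
qed

end

end

section \<open>The linear parts of the g_i\<close>

lemma omega1_eq_component: "omega1 f = component 1 f"
proof (rule poly_mapping_eqI)
  fix t
  have "coeff (omega1 f) t = (\<Sum>s\<in>Poly_Mapping.keys f. if s = t then coeff (component 1 f) t else 0)"
    unfolding omega1_def lookup_sum by (intro sum.cong) (auto simp: Poly_Mapping.lookup_single when_def)
  then show "coeff (omega1 f) t = coeff (component 1 f) t"
    by (simp add: in_keys_iff)
qed

lemma coeff_Gen_if_notin_lsupp_omega1:
  assumes "i \<notin> lsupp (omega1 f)"
  shows "coeff f (Gen i) = 0"
proof (rule ccontr)
  assume "coeff f (Gen i) \<noteq> 0"
  then have "Gen i \<in> Poly_Mapping.keys (omega1 f)"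
    by (simp add: omega1_eq_component in_keys_iff)
  then have "i \<in> lsupp (omega1 f)"
    unfolding lsupp_def by force
  with assms show False
    by simp
qed

(* c i k stands for the coefficient of a_k in g_i; rel compares the coefficients of [a_k,a_l] and
   [a_l,a_k] in [a_i + g_i, g_j] for a non-edge {k,l}. *)
lemma coeff_relations_imp_zero:
  fixes c :: "'a \<Rightarrow> 'a \<Rightarrow> 'r::comm_ring_1"
  assumes rel: "\<And>i j. i \<in> A \<Longrightarrow> j \<in> A \<Longrightarrow>
      ((if i = k then 1 else 0) + c i k) * c j l = ((if i = l then 1 else 0) + c i l) * c j k"
    and "k \<in> A" "l \<in> A" "k \<noteq> l" "c k k = 0" "c l l = 0" "j \<in> A"
  shows "c j k = 0"
proof -
  have "c k l = 0"
    using rel[of k k] assms by simp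
  then have "c j l = 0"
    using rel[of k j] assms by simp
  then show ?thesis
    using rel[of l j] assms by simp
qed

lemma compl_connected_non_neighbour:
  assumes "compl_connected A E" and "card A \<ge> 2" and "k \<in> A"
  shows "\<exists>l\<in>A. l \<noteq> k \<and> \<not> E k l"
proof -
  obtain m where m: "m \<in> A" "m \<noteq> k"
  proof (rule ccontr)
    assume "\<not> thesis"
    then have "A \<subseteq> {k}"
      using that by blast
    then have "card A \<le> 1"
      using card_mono[of "{k}" A] by simp
    then show False
      using assms(2) by simp
  qed
  have "(\<lambda>u v. u \<in> A \<and> v \<in> A \<and> u \<noteq> v \<and> \<not> E u v)\<^sup>*\<^sup>* k m"
    using assms(1,3) m unfolding compl_connected_def by blast
  then show ?thesis
    using m(2) by (cases rule: converse_rtranclpE) auto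
qed

lemma vanishes_below_2_if_linear_coeffs_zero:
  assumes "f \<in> FA A" and "\<And>k. k \<in> A \<Longrightarrow> coeff f (Gen k) = 0"
  shows "vanishes_below 2 f"
  unfolding vanishes_below_def
proof (intro allI impI)
  fix t assume nz: "coeff f t \<noteq> 0"
  show "2 \<le> mlen t"
  proof (cases t)
    case (Gen a)
    then have "a \<in> A"
      using assms(1) nz by (auto simp: FA_iff)
    with assms(2) nz Gen show ?thesis
      by simp
  next
    case (Br u v)
    then show ?thesis
      using mlen_ge_1[of u] mlen_ge_1[of v] by simp
  qed
qed

lemma linear_coeffs_zero:
  assumes sym: "\<And>p q. E p q \<Longrightarrow> E q p"
    and conn: "compl_connected A E" and card: "card A \<ge> 2"
    and direct_sum: "pcl_direct_sum A E L1 L2"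
    and shifted_gen_L1: "\<And>i. i \<in> A \<Longrightarrow> gen i + g i \<in> L1"
    and minus_g_L2: "\<And>i. i \<in> A \<Longrightarrow> - g i \<in> L2"
    and diag: "\<And>i. i \<in> A \<Longrightarrow> coeff (g i) (Gen i) = 0"
    and "j \<in> A" and "k \<in> A"
  shows "coeff (g j) (Gen k) = 0"
proof -
  define c where "c i k = coeff (g i) (Gen k)" for i k
  have rel: "((if i = k then 1 else 0) + c i k) * c j l = ((if i = l then 1 else 0) + c i l) * c j k"
    if "i \<in> A" "j \<in> A" "k \<noteq> l" "\<not> E k l" for i j k l
  proof -
    have "br (gen i + g i) (- g j) \<in> pcl_ideal A E"
      using direct_sum shifted_gen_L1 minus_g_L2 that by (auto simp: pcl_direct_sum_def)
    from coeff_swap_pcl_ideal[OF sym that(3,4) this] show ?thesis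
      using that(3) by (cases "i = k"; cases "i = l") (simp_all add: lookup_add coeff_gen c_def algebra_simps)
  qed
  obtain l where l: "l \<in> A" "l \<noteq> k" "\<not> E k l"
    using compl_connected_non_neighbour[OF conn card \<open>k \<in> A\<close>] by blast
  have diag_c: "c i i = 0" if "i \<in> A" for i
    using diag[OF that] by (simp add: c_def)
  have "c j k = 0"
    by (rule coeff_relations_imp_zero[OF rel[OF _ _ l(2)[symmetric] l(3)] \<open>k \<in> A\<close> l(1) l(2)[symmetric]
          diag_c[OF \<open>k \<in> A\<close>] diag_c[OF l(1)] \<open>j \<in> A\<close>])
  then show ?thesis
    by (simp add: c_def)
qed

theorem lemma4:
  fixes A :: "'a set" and E :: "'a \<Rightarrow> 'a \<Rightarrow> bool"
    and L1 L2 :: "('a, 'r::idom) fna set" and g :: "'a \<Rightarrow> ('a, 'r) fna"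
  assumes "finite A" and "card A \<ge> 2"
    and "\<And>p q. E p q \<Longrightarrow> E q p" and "\<And>p. \<not> E p p"
    and "\<And>p q. E p q \<Longrightarrow> p \<in> A \<and> q \<in> A"
    and "compl_connected A E"
    and "pcl_direct_sum A E L1 L2"
    and "\<And>i. i \<in> A \<Longrightarrow> g i \<in> FA A"
    and "\<And>i. i \<in> A \<Longrightarrow> gen i + g i \<in> L1"
    and "\<And>i. i \<in> A \<Longrightarrow> - g i \<in> L2"
    and "\<And>i. i \<in> A \<Longrightarrow> i \<notin> lsupp (omega1 (g i))"
  shows "\<forall>i\<in>A. g i \<in> pcl_ideal A E"
proof
  fix i assume i: "i \<in> A"
  have "coeff (g j) (Gen j) = 0" if "j \<in> A" for j
    using assms(11)[OF that] by (rule coeff_Gen_if_notin_lsupp_omega1)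
  then have "coeff (g j) (Gen k) = 0" if "j \<in> A" "k \<in> A" for j k
    using linear_coeffs_zero[OF assms(3,6,2,7,9,10)] that by blast
  then have "vanishes_below 2 (g j)" if "j \<in> A" for j
    using assms(8)[OF that] that by (intro vanishes_below_2_if_linear_coeffs_zero) auto
  then have "L2 \<subseteq> pcl_ideal A E"
    using assms(7,9,10) by (intro L2_subset_pcl_ideal)
  then have "- g i \<in> pcl_ideal A E"
    using assms(10)[OF i] by blast
  then show "g i \<in> pcl_ideal A E"
    using pcl_ideal_uminus by fastforce
qed

end
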